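(* Let $\mathcal B$ be a building set on a finite set $S\subset\mathbb N$ of even cardinality. If $\mathcal B$ has a connected component of odd cardinality, then there is no alternating $\mathcal B$-permutation.
   Context: A building set on a finite set $S\subset\mathbb N$ is a collection $\mathcal B$ of nonempty subsets of $S$ containing every singleton $\{i\}$, $i\in S$, such that $I,J\in\mathcal B$ and $I\cap J\neq\emptyset$ imply $I\cup J\in\mathcal B$. Its connected components are the inclusion-maximal elements of $\mathcal B$. For $I\subseteq S$, $\mathcal B|_I=\{J\in\mathcal B:J\subseteq I\}$. For a building set $\mathcal B$ on $S$ with $|S|=m$, a $\mathcal B$-permutation is a sequence $(x_1x_2\cdots x_m)$ listing each element of $S$ exactly once such that for each $1\le i\le m$, $x_i$ and $\max\{x_1,\dots,x_i\}$ lie in the same connected component of $\mathcal B|_{\{x_1,\dots,x_i\}}$. It is alternating if $x_1>x_2<x_3>x_4<\cdots$. *)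

theory Defs
  imports Main
begin

definition building_set :: "nat set \<Rightarrow> nat set set \<Rightarrow> bool" where
  "building_set S B \<longleftrightarrow> finite S \<and>
     (\<forall>I\<in>B. I \<noteq> {} \<and> I \<subseteq> S) \<and>
     (\<forall>i\<in>S. {i} \<in> B) \<and>
     (\<forall>I\<in>B. \<forall>J\<in>B. I \<inter> J \<noteq> {} \<longrightarrow> I \<union> J \<in> B)"

definition connected_components :: "nat set set \<Rightarrow> nat set set" where
  "connected_components B = {I \<in> B. \<forall>J\<in>B. I \<subseteq> J \<longrightarrow> J = I}"

definition restrict_bs :: "nat set set \<Rightarrow> nat set \<Rightarrow> nat set set" where
  "restrict_bs B I = {J \<in> B. J \<subseteq> I}"

text \<open>B-permutation of S, as a list x_1 ... x_m (0-based list indices).\<close>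
definition B_permutation :: "nat set \<Rightarrow> nat set set \<Rightarrow> nat list \<Rightarrow> bool" where
  "B_permutation S B xs \<longleftrightarrow> distinct xs \<and> set xs = S \<and>
     (\<forall>i < length xs.
        \<exists>C \<in> connected_components (restrict_bs B (set (take (Suc i) xs))).
          xs ! i \<in> C \<and> Max (set (take (Suc i) xs)) \<in> C)"

text \<open>Alternating: x_1 > x_2 < x_3 > x_4 < ... ; with 0-based indices,
  xs!i > xs!(i+1) for even i and xs!i < xs!(i+1) for odd i.\<close>
definition alternating :: "nat list \<Rightarrow> bool" where
  "alternating xs \<longleftrightarrow> (\<forall>i. Suc i < length xs \<longrightarrow>
     (if even i then xs ! i > xs ! Suc i else xs ! i < xs ! Suc i))"

end

theory Submission
  imports Defs
begin

(* In an alternating B-permutation x_1 x_2 ... x_m each odd-position entry x_(2k+1) exceeds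
   its successor, so the prefixes of lengths 2k+1 and 2k+2 have the same maximum. Both entries
   therefore lie in the connected component of B containing that maximum, i.e. in the same
   component. Hence every component is a disjoint union of consecutive pairs
   {x_(2k+1), x_(2k+2)} and has even cardinality. *)

lemma building_set_finite:
  assumes "building_set S B"
  shows "finite B"
proof (rule finite_subset)
  show "B \<subseteq> Pow S" using assms unfolding building_set_def by auto
  show "finite (Pow S)" using assms unfolding building_set_def by simp
qed

lemma connected_components_subset: "connected_components B \<subseteq> B"
  unfolding connected_components_def by auto

lemma connected_component_containing:
  assumes "building_set S B" and "J \<in> B"
  shows "\<exists>K\<in>connected_components B. J \<subseteq> K"
proof -
  obtain K where "K \<in> B" "J \<subseteq> K" "\<forall>K'\<in>B. K \<subseteq> K' \<longrightarrow> K = K'"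
    using finite_has_maximal2[OF building_set_finite[OF assms(1)] assms(2)] by blast
  then show ?thesis unfolding connected_components_def by auto
qed

lemma connected_components_eq_if_meet:
  assumes "building_set S B"
    and "K\<^sub>1 \<in> connected_components B" "K\<^sub>2 \<in> connected_components B" "K\<^sub>1 \<inter> K\<^sub>2 \<noteq> {}"
  shows "K\<^sub>1 = K\<^sub>2"
proof -
  have "K\<^sub>1 \<union> K\<^sub>2 \<in> B"
    using assms connected_components_subset unfolding building_set_def by blast
  then have "K\<^sub>1 \<union> K\<^sub>2 = K\<^sub>1" "K\<^sub>1 \<union> K\<^sub>2 = K\<^sub>2"
    using assms(2,3) unfolding connected_components_def by auto
  then show ?thesis by simp
qed

lemma B_permutation_component_of_Max:
  assumes "building_set S B" and "B_permutation S B xs" and "i < length xs"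
  shows "\<exists>K\<in>connected_components B. xs ! i \<in> K \<and> Max (set (take (Suc i) xs)) \<in> K"
proof -
  obtain C where C: "C \<in> connected_components (restrict_bs B (set (take (Suc i) xs)))"
      "xs ! i \<in> C" "Max (set (take (Suc i) xs)) \<in> C"
    using assms(2,3) unfolding B_permutation_def by auto
  then have "C \<in> B" unfolding connected_components_def restrict_bs_def by auto
  then obtain K where "K \<in> connected_components B" "C \<subseteq> K"
    using connected_component_containing[OF assms(1)] by blast
  with C(2,3) show ?thesis by blast
qed

lemma Max_take_Suc_Suc_if_descent:
  fixes xs :: "'a::linorder list"
  assumes "Suc j < length xs" and "xs ! Suc j < xs ! j"
  shows "Max (set (take (Suc (Suc j)) xs)) = Max (set (take (Suc j) xs))"
proof -
  have mem: "xs ! j \<in> set (take (Suc j) xs)"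
    using assms(1) by (simp add: take_Suc_conv_app_nth)
  then have "xs ! Suc j < Max (set (take (Suc j) xs))"
    using assms(2) by (meson List.finite_set Max_ge less_le_trans)
  moreover have "set (take (Suc (Suc j)) xs) = insert (xs ! Suc j) (set (take (Suc j) xs))"
    using assms(1) by (simp add: take_Suc_conv_app_nth insert_commute)
  moreover have "set (take (Suc j) xs) \<noteq> {}" using mem by auto
  ultimately show ?thesis by (simp add: max_def less_imp_le)
qed

lemma even_card_Int_if_pairs_together:
  assumes "distinct ys" and "even (length ys)"
    and "\<And>k. Suc (2 * k) < length ys \<Longrightarrow> ys ! (2 * k) \<in> C \<longleftrightarrow> ys ! Suc (2 * k) \<in> C"
  shows "even (card (C \<inter> set ys))"
  using assms
proof (induction ys rule: induct_list012)
  case (3 x y zs)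
  have "even (card (C \<inter> set zs))"
  proof (rule "3.IH"(1))
    fix k assume "Suc (2 * k) < length zs"
    then show "zs ! (2 * k) \<in> C \<longleftrightarrow> zs ! Suc (2 * k) \<in> C"
      using "3.prems"(3)[of "Suc k"] by simp
  qed (use "3.prems" in auto)
  moreover have "x \<in> C \<longleftrightarrow> y \<in> C" using "3.prems"(3)[of 0] by simp
  then have "card (C \<inter> set (x # y # zs)) =
      (if x \<in> C then 2 else 0) + card (C \<inter> set zs)"
    using "3.prems"(1) by (auto simp: insert_commute)
  ultimately show ?case by simp
qed simp_all

theorem proposition4p2:
  fixes S :: "nat set" and B :: "nat set set"
  assumes "building_set S B"
    and "even (card S)"
    and "\<exists>C \<in> connected_components B. odd (card C)"
  shows "\<not> (\<exists>xs. B_permutation S B xs \<and> alternating xs)"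
proof
  assume "\<exists>xs. B_permutation S B xs \<and> alternating xs"
  then obtain xs where perm: "B_permutation S B xs" and alt: "alternating xs" by blast
  obtain C where C: "C \<in> connected_components B" "odd (card C)" using assms(3) by blast
  have distinct: "distinct xs" and set_xs: "set xs = S"
    using perm unfolding B_permutation_def by auto
  have "xs ! (2 * k) \<in> C \<longleftrightarrow> xs ! Suc (2 * k) \<in> C" if k: "Suc (2 * k) < length xs" for k
  proof -
    have "xs ! Suc (2 * k) < xs ! (2 * k)" using alt k unfolding alternating_def by auto
    then have "Max (set (take (Suc (Suc (2 * k))) xs)) = Max (set (take (Suc (2 * k)) xs))"
      using Max_take_Suc_Suc_if_descent k by blast
    then obtain K\<^sub>1 K\<^sub>2 where "K\<^sub>1 \<in> connected_components B" "K\<^sub>2 \<in> connected_components B"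
        "xs ! (2 * k) \<in> K\<^sub>1" "xs ! Suc (2 * k) \<in> K\<^sub>2" "K\<^sub>1 \<inter> K\<^sub>2 \<noteq> {}"
      using B_permutation_component_of_Max[OF assms(1) perm] k
      by (metis Suc_lessD disjoint_iff)
    then show ?thesis using connected_components_eq_if_meet[OF assms(1)] C(1) by blast
  qed
  moreover have "even (length xs)" using assms(2) distinct_card[OF distinct] set_xs by simp
  ultimately have "even (card (C \<inter> S))"
    using even_card_Int_if_pairs_together[OF distinct] set_xs by blast
  moreover have "C \<subseteq> S"
    using C(1) connected_components_subset assms(1) unfolding building_set_def by blast
  ultimately show False using C(2) by (simp add: Int_absorb2)
qed

end
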